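(* Exactly $\gcd(3,q-1)$ of the $\mathbb{F}_q$-planes in $\mathrm{orb}(\mathsf S_T)$ are fixed setwise by $\phi$, namely the sets $\pi_\lambda=\{(x,x^q,\lambda x^{q^2}):x\in\mathbb{F}_{q^3}^*\}$ with $\lambda\in\mathbb{F}_q$, $\lambda^3=1$. Further $\pi_1=\mathcal P_{2,q}$, and if $\gcd(3,q-1)=3$ then the other two $\mathbb{F}_q$-planes fixed setwise by $\phi$ consist of only Type III points and only Type III lines.
   Context: Let $q$ be a prime power, $\mathbb{F}_{q^3}^*=\mathbb{F}_{q^3}\setminus\{0\}$. Points of $\mathrm{PG}(2,q^3)$ have homogeneous coordinates $(x,y,z)$ and lines $[a,b,c]$. An $\mathbb{F}_q$-plane is a subplane of order $q$; its lines are those meeting it in $q+1$ points. Let $\phi$ be the collineation $(x,y,z)\mapsto(z^q,x^q,y^q)$ (on lines $[d,e,f]\mapsto[f^q,d^q,e^q]$), whose fixed points form $\mathcal P_{2,q}=\{(x,x^q,x^{q^2}):x\in\mathbb{F}_{q^3}^*\}$. A point has Type I, II, III according as its $\phi$-orbit is one point, three collinear points, three non-collinear points; a line has Type I, II, III according as its $\phi$-orbit is one line, three concurrent lines, three non-concurrent lines. Let $\psi_t:(x,y,z)\mapsto(tx,t^qy,t^{q^2}z)$ for $t\in\mathbb{F}_{q^3}^*$, $\mathsf S_T=\{\psi_t\}$, and $\mathrm{orb}(\mathsf S_T)$ the set of point orbits of $\mathsf S_T$. *)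

theory Defs
  imports "HOL-Computational_Algebra.Primes"
begin

type_synonym 'a vec3 = "'a \<times> 'a \<times> 'a"

definition smul3 :: "'a::field \<Rightarrow> 'a vec3 \<Rightarrow> 'a vec3" where
  "smul3 c v = (case v of (x,y,z) \<Rightarrow> (c*x, c*y, c*z))"

definition pclass :: "'a::field vec3 \<Rightarrow> 'a vec3 set" where
  "pclass v = {smul3 c v | c. c \<noteq> 0}"

definition pg_points :: "'a::field vec3 set set" where
  "pg_points = {pclass v | v. v \<noteq> (0,0,0)}"

text \<open>Lines are represented by classes of coordinate triples [a,b,c] as well.\<close>
definition pg_lines :: "'a::field vec3 set set" where
  "pg_lines = {pclass v | v. v \<noteq> (0,0,0)}"

definition dot3 :: "'a::field vec3 \<Rightarrow> 'a vec3 \<Rightarrow> 'a" where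
  "dot3 w v = (case w of (a,b,c) \<Rightarrow> case v of (x,y,z) \<Rightarrow> a*x + b*y + c*z)"

definition incident :: "'a::field vec3 set \<Rightarrow> 'a vec3 set \<Rightarrow> bool" where
  "incident P L \<longleftrightarrow> (\<exists>v\<in>P. \<exists>w\<in>L. dot3 w v = 0)"

definition collinear3 :: "'a::field vec3 set \<Rightarrow> 'a vec3 set \<Rightarrow> 'a vec3 set \<Rightarrow> bool" where
  "collinear3 P Q R \<longleftrightarrow> (\<exists>L\<in>pg_lines. incident P L \<and> incident Q L \<and> incident R L)"

definition concurrent3 :: "'a::field vec3 set \<Rightarrow> 'a vec3 set \<Rightarrow> 'a vec3 set \<Rightarrow> bool" where
  "concurrent3 L M N \<longleftrightarrow> (\<exists>P\<in>pg_points. incident P L \<and> incident P M \<and> incident P N)"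

definition on_line :: "'a::field vec3 set set \<Rightarrow> 'a vec3 set \<Rightarrow> 'a vec3 set set" where
  "on_line B L = {P\<in>B. incident P L}"

definition sec_lines :: "'a::field vec3 set set \<Rightarrow> 'a vec3 set set" where
  "sec_lines B = {L\<in>pg_lines. \<exists>P\<in>B. \<exists>Q\<in>B. P \<noteq> Q \<and> incident P L \<and> incident Q L}"

text \<open>Subplane of order q (an F_q-plane): B together with the lines meeting
  it in at least two points forms a projective plane of order q under the
  inherited incidence.\<close>
definition is_subplane :: "nat \<Rightarrow> 'a::field vec3 set set \<Rightarrow> bool" where
  "is_subplane q B \<longleftrightarrow> B \<subseteq> pg_points
     \<and> (\<forall>L\<in>sec_lines B. finite (on_line B L) \<and> card (on_line B L) = q + 1)
     \<and> (\<forall>L\<in>sec_lines B. \<forall>M\<in>sec_lines B. L \<noteq> M \<longrightarrow> (\<exists>P\<in>B. incident P L \<and> incident P M))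
     \<and> (\<exists>P1\<in>B. \<exists>P2\<in>B. \<exists>P3\<in>B. \<exists>P4\<in>B. distinct [P1,P2,P3,P4]
          \<and> \<not> collinear3 P1 P2 P3 \<and> \<not> collinear3 P1 P2 P4
          \<and> \<not> collinear3 P1 P3 P4 \<and> \<not> collinear3 P2 P3 P4)"

definition plane_lines :: "nat \<Rightarrow> 'a::field vec3 set set \<Rightarrow> 'a vec3 set set" where
  "plane_lines q B = {L\<in>pg_lines. finite (on_line B L) \<and> card (on_line B L) = q + 1}"

text \<open>The collineation phi: (x,y,z) -> (z^q,x^q,y^q); on lines [d,e,f] -> [f^q,d^q,e^q]
  (same formula).\<close>
definition phi_vec :: "nat \<Rightarrow> 'a::field vec3 \<Rightarrow> 'a vec3" where
  "phi_vec q v = (case v of (x,y,z) \<Rightarrow> (z^q, x^q, y^q))"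

definition phi :: "nat \<Rightarrow> 'a::field vec3 set \<Rightarrow> 'a vec3 set" where
  "phi q P = phi_vec q ` P"

definition point_type_III :: "nat \<Rightarrow> 'a::field vec3 set \<Rightarrow> bool" where
  "point_type_III q P \<longleftrightarrow> \<not> collinear3 P (phi q P) (phi q (phi q P))"

definition line_type_III :: "nat \<Rightarrow> 'a::field vec3 set \<Rightarrow> bool" where
  "line_type_III q L \<longleftrightarrow> \<not> concurrent3 L (phi q L) (phi q (phi q L))"

definition psi_vec :: "nat \<Rightarrow> 'a::field \<Rightarrow> 'a vec3 \<Rightarrow> 'a vec3" where
  "psi_vec q t v = (case v of (x,y,z) \<Rightarrow> (t*x, t^q*y, t^(q^2)*z))"

definition ST_orbit :: "nat \<Rightarrow> 'a::field vec3 set \<Rightarrow> 'a vec3 set set" where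
  "ST_orbit q P = {psi_vec q t ` P | t. t \<noteq> 0}"

definition orb_ST :: "nat \<Rightarrow> 'a::field vec3 set set set" where
  "orb_ST q = {ST_orbit q P | P. P \<in> pg_points}"

definition pi_lambda :: "nat \<Rightarrow> 'a::field \<Rightarrow> 'a vec3 set set" where
  "pi_lambda q l = {pclass (x, x^q, l * x^(q^2)) | x. x \<noteq> 0}"

end

theory Submission
  imports Defs "HOL-Number_Theory.Residues" "HOL-Computational_Algebra.Polynomial"
begin

text \<open>The library's \<open>finite_field_power_card_eq_same\<close> is stated for the sort \<open>finite_field\<close>,
  which a type of sort \<open>{finite, field}\<close> cannot be shown to inhabit inside a proof.\<close>

lemma power_card_minus_one_eq_1:
  fixes x :: "'a::{finite,field}"
  assumes "x \<noteq> 0"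
  shows "x ^ (card (UNIV :: 'a set) - 1) = 1"
proof -
  have "(\<Prod>y\<in>UNIV - {0}. x * y) = (\<Prod>y\<in>UNIV - {0::'a}. y)"
    using assms by (intro prod.reindex_bij_witness[of _ "\<lambda>y. y / x" "\<lambda>y. x * y"]) auto
  then have "x ^ card (UNIV - {0::'a}) * (\<Prod>y\<in>UNIV - {0::'a}. y) = (\<Prod>y\<in>UNIV - {0::'a}. y)"
    by (simp add: prod.distrib)
  then show ?thesis
    by (simp add: card_Diff_singleton)
qed

lemma power_card_eq_self:
  fixes x :: "'a::{finite,field}"
  shows "x ^ card (UNIV :: 'a set) = x"
proof -
  have "x ^ card (UNIV :: 'a set) = x * x ^ (card (UNIV :: 'a set) - 1)"
    using finite_UNIV_card_ge_0[where 'a='a] by (simp flip: power_Suc)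
  then show ?thesis
    using power_card_minus_one_eq_1[of x] by (cases "x = 0") auto
qed

lemma card_roots_power_le:
  fixes c :: "'a::field"
  assumes "n > 0"
  shows "card {x. x ^ n = c} \<le> n"
proof -
  define p where "p = monom (1::'a) n - [:c:]"
  have "coeff p n = 1"
    using assms by (cases n) (simp_all add: p_def)
  then have "p \<noteq> 0"
    by auto
  moreover have "degree p \<le> n"
    unfolding p_def by (rule degree_diff_le) (simp_all add: degree_monom_le)
  moreover have "{x. x ^ n = c} = {x. poly p x = 0}"
    by (simp add: p_def poly_monom)
  ultimately show ?thesis
    using card_poly_roots_bound[of p] by simp
qed

lemma card_eq_card_image_mult_fibre:
  assumes "finite A" and "\<And>y. y \<in> f ` A \<Longrightarrow> card {x \<in> A. f x = y} = k"
  shows "card A = card (f ` A) * k"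
proof -
  have "card A = (\<Sum>y\<in>f ` A. card {x \<in> A. f x = y})"
    unfolding card_eq_sum by (rule sum.image_gen[OF assms(1)])
  also have "\<dots> = card (f ` A) * k"
    using assms(2) by simp
  finally show ?thesis .
qed

lemma roots_of_unity_finite_field:
  fixes n m :: nat
  assumes nm: "n * m = card (UNIV :: 'a::{finite,field} set) - 1"
  shows "card {x::'a. x ^ n = 1} = n"
    and "(\<lambda>x. x ^ n) ` (UNIV - {0::'a}) = {y. y ^ m = 1}"
proof -
  define K where "K = {x::'a. x ^ n = 1}"
  define I where "I = (\<lambda>x. x ^ n) ` (UNIV - {0::'a})"
  have "card {0::'a, 1} \<le> card (UNIV :: 'a set)"
    by (rule card_mono) simp_all
  then have "n * m \<noteq> 0"
    using nm by simp
  then have "n > 0" "m > 0"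
    by simp_all
  have I_sub: "I \<subseteq> {y. y ^ m = 1}"
    using power_card_minus_one_eq_1 by (auto simp: I_def nm simp flip: power_mult)
  have fibre: "card {x \<in> UNIV - {0}. x ^ n = y} = card K" if "y \<in> I" for y
  proof -
    obtain x0 where x0: "x0 \<noteq> 0" "y = x0 ^ n"
      using \<open>y \<in> I\<close> by (auto simp: I_def)
    have "{x \<in> UNIV - {0}. x ^ n = y} = (\<lambda>k. x0 * k) ` K"
    proof
      show "{x \<in> UNIV - {0}. x ^ n = y} \<subseteq> (\<lambda>k. x0 * k) ` K"
      proof
        fix x assume "x \<in> {x \<in> UNIV - {0}. x ^ n = y}"
        then have "x = x0 * (x / x0)" "(x / x0) ^ n = 1"
          using x0 by (auto simp: power_divide)
        then show "x \<in> (\<lambda>k. x0 * k) ` K"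
          unfolding K_def by blast
      qed
      show "(\<lambda>k. x0 * k) ` K \<subseteq> {x \<in> UNIV - {0}. x ^ n = y}"
        using x0 \<open>n > 0\<close> by (auto simp: K_def power_mult_distrib power_0_left)
    qed
    moreover have "inj_on (\<lambda>k. x0 * k) K"
      using x0 by (auto intro: inj_onI)
    ultimately show ?thesis
      by (simp add: card_image)
  qed
  have counts: "n * m = card I * card K"
    using card_eq_card_image_mult_fibre[of "UNIV - {0::'a}" "\<lambda>x. x ^ n", OF _ fibre]
    by (simp add: nm I_def card_Diff_singleton)
  have K_le: "card K \<le> n"
    unfolding K_def using card_roots_power_le \<open>n > 0\<close> by blast
  have I_le: "card I \<le> m"
    using card_mono[OF _ I_sub] card_roots_power_le[OF \<open>m > 0\<close>, of "1::'a"] by simp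
  have "card K = n"
  proof (rule ccontr)
    assume "card K \<noteq> n"
    with K_le have "card I * card K < m * n"
      using I_le \<open>m > 0\<close> by (meson le_less_trans mult_le_mono1 mult_less_mono2 order_le_neq_trans)
    with counts show False
      by (simp add: mult.commute)
  qed
  with counts \<open>n > 0\<close> have "card I = m"
    by simp
  show "card {x::'a. x ^ n = 1} = n"
    using \<open>card K = n\<close> by (simp add: K_def)
  have "card I = card {y::'a. y ^ m = 1}"
    using card_mono[OF _ I_sub] card_roots_power_le[OF \<open>m > 0\<close>, of "1::'a"] \<open>card I = m\<close>
    by simp
  then show "(\<lambda>x. x ^ n) ` (UNIV - {0::'a}) = {y. y ^ m = 1}"
    using card_subset_eq[OF _ I_sub] by (simp add: I_def)
qed

lemma power_gcd_eq_1:
  fixes x :: "'a::monoid_mult"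
  assumes "x ^ a = 1" and "x ^ b = 1" and "a \<noteq> 0"
  shows "x ^ gcd a b = 1"
proof -
  obtain u v where "a * u = b * v + gcd a b"
    using bezout_nat[OF assms(3)] by blast
  then have "x ^ (a * u) = x ^ (b * v) * x ^ gcd a b"
    by (simp add: power_add)
  with assms(1,2) show ?thesis
    by (simp add: power_mult)
qed

locale cubic_frobenius =
  fixes q :: nat and frob :: "'a::{finite,field} \<Rightarrow> 'a"
  assumes prime_power: "\<exists>p k. prime p \<and> k > 0 \<and> q = p ^ k"
    and card_UNIV: "card (UNIV :: 'a set) = q ^ 3"
    and frob_eq: "frob x = x ^ q"
begin

lemma q_gt_1: "q > 1"
  using prime_power by (metis one_less_power prime_gt_1_nat)

lemma q_power_less: "m < n \<Longrightarrow> q ^ m < q ^ n"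
  using q_gt_1 by (simp add: power_strict_increasing)

lemma frob_add: "frob (x + y) = frob x + frob y"
proof -
  obtain p k where p: "prime p" "k > 0" "q = p ^ k"
    using prime_power by blast
  have "CHAR('a) dvd p ^ (3 * k)"
    using CHAR_dvd_CARD[where 'a='a] by (simp add: card_UNIV p(3) power_mult mult.commute)
  moreover have "prime CHAR('a)"
    using finite_imp_CHAR_pos[where 'a='a] prime_CHAR_semidom by auto
  ultimately have "CHAR('a) = p"
    using p(1) prime_dvd_power primes_dvd_imp_eq by blast
  then show ?thesis
    using freshmans_dream'[where 'a='a and m=q and n=k] \<open>prime CHAR('a)\<close> p(3) by (simp add: frob_eq)
qed

lemma frob_mult: "frob (x * y) = frob x * frob y"
  by (simp add: frob_eq power_mult_distrib)

lemma frob_0 [simp]: "frob 0 = 0"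
  using q_gt_1 by (simp add: frob_eq)

lemma frob_1 [simp]: "frob 1 = 1"
  by (simp add: frob_eq)

lemma frob_frob_frob [simp]: "frob (frob (frob x)) = x"
  using power_card_eq_self[of x] by (simp add: frob_eq card_UNIV power3_eq_cube flip: power_mult)

lemma frob_eq_iff [simp]: "frob x = frob y \<longleftrightarrow> x = y"
  by (metis frob_frob_frob)

lemma frob_eq_0_iff [simp]: "frob x = 0 \<longleftrightarrow> x = 0"
  using frob_eq_iff[of x 0] by simp

lemma frob_minus: "frob (- x) = - frob x"
  using frob_add[of x "- x"] by (simp add: add_eq_0_iff)

lemma frob_diff: "frob (x - y) = frob x - frob y"
  using frob_add[of x "- y"] by (simp add: frob_minus)

lemma frob_inverse: "frob (inverse x) = inverse (frob x)"
  by (cases "x = 0") (simp_all add: field_simps flip: frob_mult)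

lemma frob_divide: "frob (x / y) = frob x / frob y"
  by (simp add: divide_inverse frob_mult frob_inverse)

lemma frob_power: "frob (x ^ n) = frob x ^ n"
  by (induction n) (simp_all add: frob_mult)

lemma power_q_eq_frob: "x ^ q = frob x"
  by (simp add: frob_eq)

lemma power_q2_eq_frob_frob: "x ^ (q ^ 2) = frob (frob x)"
  by (simp add: frob_eq power2_eq_square power_mult)

lemma frob_eq_mult_power: "frob x = x * x ^ (q - 1)"
  using q_gt_1 by (simp add: frob_eq flip: power_Suc)

lemma frob_eq_self_iff: "frob x = x \<longleftrightarrow> x = 0 \<or> x ^ (q - 1) = 1"
  using frob_eq_mult_power[of x] by auto

lemma q_cube_minus_1: "(q - 1) * (q\<^sup>2 + q + 1) = q ^ 3 - 1"
proof -
  obtain r where "q = Suc r"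
    using q_gt_1 by (cases q) auto
  then show ?thesis
    by (simp add: power2_eq_square power3_eq_cube algebra_simps)
qed

definition Fq :: "'a set" where
  "Fq = {x. frob x = x}"

lemma card_Fq: "card Fq = q"
proof -
  have "Fq = insert 0 {x. x ^ (q - 1) = 1}"
    by (auto simp: Fq_def frob_eq_self_iff)
  moreover have "card {x::'a. x ^ (q - 1) = 1} = q - 1"
    using roots_of_unity_finite_field(1)[OF q_cube_minus_1[folded card_UNIV]] .
  ultimately show ?thesis
    using q_gt_1 by (simp add: power_0_left)
qed

lemma Fq_iff: "c \<in> Fq \<longleftrightarrow> frob c = c"
  by (simp add: Fq_def)

lemma Fq_0 [simp]: "0 \<in> Fq" and Fq_1 [simp]: "1 \<in> Fq"
  by (simp_all add: Fq_iff)

lemma Fq_add [intro]: "a \<in> Fq \<Longrightarrow> b \<in> Fq \<Longrightarrow> a + b \<in> Fq"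
  and Fq_diff [intro]: "a \<in> Fq \<Longrightarrow> b \<in> Fq \<Longrightarrow> a - b \<in> Fq"
  and Fq_minus [intro]: "a \<in> Fq \<Longrightarrow> - a \<in> Fq"
  and Fq_mult [intro]: "a \<in> Fq \<Longrightarrow> b \<in> Fq \<Longrightarrow> a * b \<in> Fq"
  and Fq_divide [intro]: "a \<in> Fq \<Longrightarrow> b \<in> Fq \<Longrightarrow> a / b \<in> Fq"
  by (simp_all add: Fq_iff frob_add frob_diff frob_minus frob_mult frob_divide)

definition fnorm :: "'a \<Rightarrow> 'a" where
  "fnorm x = x * frob x * frob (frob x)"

lemma fnorm_eq_0_iff [simp]: "fnorm x = 0 \<longleftrightarrow> x = 0"
  by (simp add: fnorm_def)

lemma fnorm_mult: "fnorm (x * y) = fnorm x * fnorm y"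
  by (simp add: fnorm_def frob_mult mult_ac)

lemma fnorm_divide: "fnorm (x / y) = fnorm x / fnorm y"
  by (simp add: fnorm_def frob_divide)

lemma frob_fnorm: "frob (fnorm x) = fnorm x"
  by (simp add: fnorm_def frob_mult mult_ac)

lemma fnorm_frob: "fnorm (frob x) = fnorm x"
  by (simp add: fnorm_def mult_ac)

lemma fnorm_Fq: "c \<in> Fq \<Longrightarrow> fnorm c = c ^ 3"
  by (simp add: fnorm_def Fq_iff power3_eq_cube)

theorem hilbert90:
  assumes "fnorm c = 1"
  shows "\<exists>s. s \<noteq> 0 \<and> frob s = c * s"
proof -
  have "c ^ (q\<^sup>2 + q + 1) = 1"
    using assms by (simp add: fnorm_def power_add power_q_eq_frob power_q2_eq_frob_frob mult_ac)
  then obtain s where s: "s \<noteq> 0" "c = s ^ (q - 1)"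
    using roots_of_unity_finite_field(2)[OF q_cube_minus_1[folded card_UNIV]] by blast
  then have "frob s = c * s"
    by (simp add: frob_eq_mult_power mult.commute)
  with s show ?thesis
    by blast
qed

lemma card_cube_roots_of_unity_Fq: "card {l. frob l = l \<and> l ^ 3 = 1} = gcd 3 (q - 1)"
proof -
  define g where "g = gcd 3 (q - 1)"
  have "g dvd 3" "g dvd q - 1"
    by (simp_all add: g_def)
  have "{l. frob l = l \<and> l ^ 3 = 1} = {l. l ^ g = 1}"
  proof (intro subset_antisym subsetI)
    fix l assume "l \<in> {l. frob l = l \<and> l ^ 3 = 1}"
    then have "l ^ 3 = 1" "l ^ (q - 1) = 1"
      by (auto simp: frob_eq_self_iff)
    then show "l \<in> {l. l ^ g = 1}"
      using power_gcd_eq_1[of l 3 "q - 1"] by (simp add: g_def)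
  next
    fix l :: 'a assume "l \<in> {l. l ^ g = 1}"
    then have "l ^ (g * k) = 1" for k
      by (simp add: power_mult)
    then have "l ^ 3 = 1" "l ^ (q - 1) = 1"
      using \<open>g dvd 3\<close> \<open>g dvd q - 1\<close> by (metis dvdE)+
    then show "l \<in> {l. frob l = l \<and> l ^ 3 = 1}"
      by (simp add: frob_eq_self_iff)
  qed
  moreover obtain k where "q - 1 = g * k"
    using \<open>g dvd q - 1\<close> by blast
  then have "g * (k * (q\<^sup>2 + q + 1)) = card (UNIV :: 'a set) - 1"
    using q_cube_minus_1 by (simp add: card_UNIV mult.assoc add_mult_distrib2)
  ultimately show ?thesis
    using roots_of_unity_finite_field(1) by (simp add: g_def)
qed

end

lemma smul3_simp [simp]: "smul3 c (x, y, z) = (c * x, c * y, c * z)"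
  by (simp add: smul3_def)

lemma dot3_simp [simp]: "dot3 (a, b, c) (x, y, z) = a * x + b * y + c * z"
  by (simp add: dot3_def)

lemma smul3_1 [simp]: "smul3 1 v = v"
  by (cases v) simp

lemma smul3_0 [simp]: "smul3 0 v = (0, 0, 0)"
  by (cases v) simp

lemma smul3_smul3 [simp]: "smul3 c (smul3 d v) = smul3 (c * d) v"
  by (cases v) simp

lemma dot3_smul3: "dot3 (smul3 d w) (smul3 c v) = d * c * dot3 w v"
  by (cases w; cases v) (simp add: algebra_simps)

lemma mem_pclass: "u \<in> pclass v \<longleftrightarrow> (\<exists>c. c \<noteq> 0 \<and> u = smul3 c v)"
  by (auto simp: pclass_def)

lemma self_in_pclass [simp]: "v \<in> pclass v"
  unfolding mem_pclass by (rule exI[of _ 1]) simp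

lemma pclass_smul3:
  assumes "c \<noteq> 0"
  shows "pclass (smul3 c v) = pclass v"
proof (intro subset_antisym subsetI)
  fix u assume "u \<in> pclass (smul3 c v)"
  then obtain d where "d \<noteq> 0" "u = smul3 (d * c) v"
    unfolding mem_pclass by auto
  then show "u \<in> pclass v"
    using assms unfolding mem_pclass by (metis mult_eq_0_iff)
next
  fix u assume "u \<in> pclass v"
  then obtain d where "d \<noteq> 0" "u = smul3 d v"
    unfolding mem_pclass by blast
  then have "d / c \<noteq> 0" "u = smul3 (d / c) (smul3 c v)"
    using assms by simp_all
  then show "u \<in> pclass (smul3 c v)"
    unfolding mem_pclass by blast
qed

lemma pclass_eq_iff: "pclass v = pclass w \<longleftrightarrow> (\<exists>c. c \<noteq> 0 \<and> w = smul3 c v)"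
proof
  assume "pclass v = pclass w"
  then have "w \<in> pclass v"
    by simp
  then show "\<exists>c. c \<noteq> 0 \<and> w = smul3 c v"
    by (simp add: mem_pclass)
next
  assume "\<exists>c. c \<noteq> 0 \<and> w = smul3 c v"
  then obtain c where "c \<noteq> 0" "w = smul3 c v"
    by blast
  then show "pclass v = pclass w"
    by (simp add: pclass_smul3)
qed

lemma incident_pclass: "incident (pclass v) (pclass w) \<longleftrightarrow> dot3 w v = 0"
proof
  assume "incident (pclass v) (pclass w)"
  then obtain v' w' where "v' \<in> pclass v" "w' \<in> pclass w" "dot3 w' v' = 0"
    unfolding incident_def by blast
  moreover from this(1,2) obtain c d where "c \<noteq> 0" "v' = smul3 c v" "d \<noteq> 0" "w' = smul3 d w"
    unfolding mem_pclass by blast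
  ultimately show "dot3 w v = 0"
    by (simp add: dot3_smul3)
next
  assume "dot3 w v = 0"
  then show "incident (pclass v) (pclass w)"
    unfolding incident_def using self_in_pclass by blast
qed

lemma pg_lines_eq_pg_points: "pg_lines = pg_points"
  by (simp add: pg_lines_def pg_points_def)

lemma pg_points_iff: "P \<in> pg_points \<longleftrightarrow> (\<exists>v. v \<noteq> (0, 0, 0) \<and> P = pclass v)"
  by (auto simp: pg_points_def)

lemma image_pclass:
  assumes "\<And>c v. f (smul3 c v) = smul3 (\<sigma> c) (f v)"
    and "\<And>c. \<sigma> c = 0 \<longleftrightarrow> c = 0" and "surj \<sigma>"
  shows "f ` pclass v = pclass (f v)"
proof (intro subset_antisym subsetI)
  fix u assume "u \<in> f ` pclass v"
  then obtain w where "w \<in> pclass v" "u = f w"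
    by blast
  then obtain c where "c \<noteq> 0" "u = f (smul3 c v)"
    unfolding mem_pclass by blast
  with assms(1,2) have "\<sigma> c \<noteq> 0" "u = smul3 (\<sigma> c) (f v)"
    by simp_all
  then show "u \<in> pclass (f v)"
    unfolding mem_pclass by blast
next
  fix u assume "u \<in> pclass (f v)"
  then obtain d where "d \<noteq> 0" "u = smul3 d (f v)"
    unfolding mem_pclass by blast
  moreover obtain c where "d = \<sigma> c"
    using assms(3) by (metis surjD)
  ultimately have "c \<noteq> 0" "u = f (smul3 c v)"
    using assms(1,2) by simp_all
  then have "smul3 c v \<in> pclass v" "u = f (smul3 c v)"
    unfolding mem_pclass by blast+
  then show "u \<in> f ` pclass v"
    by blast
qed

definition cross3 :: "'a::field vec3 \<Rightarrow> 'a vec3 \<Rightarrow> 'a vec3" where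
  "cross3 u v = (case u of (a, b, c) \<Rightarrow> case v of (x, y, z) \<Rightarrow>
     (b * z - c * y, c * x - a * z, a * y - b * x))"

lemma cross3_eq_0_imp_parallel:
  fixes u v :: "'a::field vec3"
  assumes "u \<noteq> (0, 0, 0)" and "cross3 u v = (0, 0, 0)"
  shows "\<exists>k. v = smul3 k u"
proof -
  obtain a b c x y z where uv: "u = (a, b, c)" "v = (x, y, z)"
    by (cases u; cases v)
  have eqs: "b * z = c * y" "c * x = a * z" "a * y = b * x"
    using assms(2) by (simp_all add: uv cross3_def)
  consider "a \<noteq> 0" | "b \<noteq> 0" | "c \<noteq> 0"
    using assms(1) uv by auto
  then show ?thesis
  proof cases
    case 1
    with eqs have "v = smul3 (x / a) u"
      by (simp add: uv field_simps)
    then show ?thesis ..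
  next
    case 2
    with eqs have "v = smul3 (y / b) u"
      by (simp add: uv field_simps)
    then show ?thesis ..
  next
    case 3
    with eqs have "v = smul3 (z / c) u"
      by (simp add: uv field_simps)
    then show ?thesis ..
  qed
qed

lemma cross3_cross3:
  fixes a b x :: "'a::field vec3"
  assumes "dot3 a x = 0" and "dot3 b x = 0"
  shows "cross3 (cross3 a b) x = (0, 0, 0)"
proof -
  obtain a1 a2 a3 b1 b2 b3 x1 x2 x3 where abx: "a = (a1, a2, a3)" "b = (b1, b2, b3)" "x = (x1, x2, x3)"
    by (cases a; cases b; cases x)
  have "cross3 (cross3 a b) x = (dot3 a x * b1 - dot3 b x * a1, dot3 a x * b2 - dot3 b x * a2,
      dot3 a x * b3 - dot3 b x * a3)"
    by (simp add: abx cross3_def algebra_simps)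
  with assms show ?thesis
    by simp
qed

lemma pclass_eq_cross3:
  fixes a b x :: "'a::field vec3"
  assumes "x \<noteq> (0, 0, 0)" and "dot3 a x = 0" and "dot3 b x = 0" and "cross3 a b \<noteq> (0, 0, 0)"
  shows "pclass x = pclass (cross3 a b)"
proof -
  obtain k where k: "x = smul3 k (cross3 a b)"
    using cross3_eq_0_imp_parallel[OF assms(4) cross3_cross3[OF assms(2,3)]] by blast
  with assms(1) have "k \<noteq> 0"
    by auto
  with k show ?thesis
    by (simp add: pclass_smul3)
qed

lemma two_lines_meet_at_most_once:
  fixes L M :: "'a::field vec3 set"
  assumes "L \<in> pg_lines" "M \<in> pg_lines" "L \<noteq> M" and "P \<in> pg_points" "Q \<in> pg_points"
    and "incident P L" "incident P M" "incident Q L" "incident Q M"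
  shows "P = Q"
proof -
  obtain a where a: "a \<noteq> (0, 0, 0)" "L = pclass a"
    using assms(1) unfolding pg_lines_eq_pg_points pg_points_iff by blast
  obtain b where b: "b \<noteq> (0, 0, 0)" "M = pclass b"
    using assms(2) unfolding pg_lines_eq_pg_points pg_points_iff by blast
  obtain u where u: "u \<noteq> (0, 0, 0)" "P = pclass u"
    using assms(4) unfolding pg_points_iff by blast
  obtain v where v: "v \<noteq> (0, 0, 0)" "Q = pclass v"
    using assms(5) unfolding pg_points_iff by blast
  have cross: "cross3 a b \<noteq> (0, 0, 0)"
  proof
    assume "cross3 a b = (0, 0, 0)"
    then obtain k where k: "b = smul3 k a"
      using cross3_eq_0_imp_parallel a(1) by blast
    with b(1) have "k \<noteq> 0"
      by auto
    with k a(2) b(2) assms(3) show False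
      by (simp add: pclass_smul3)
  qed
  have "dot3 a u = 0" "dot3 b u = 0" "dot3 a v = 0" "dot3 b v = 0"
    using assms(6-9) unfolding a(2) b(2) u(2) v(2) incident_pclass .
  then have "pclass u = pclass (cross3 a b)" "pclass v = pclass (cross3 a b)"
    using pclass_eq_cross3[OF u(1) _ _ cross] pclass_eq_cross3[OF v(1) _ _ cross] by blast+
  with u(2) v(2) show ?thesis
    by simp
qed

context cubic_frobenius
begin

lemma phi_vec_simp [simp]: "phi_vec q (x, y, z) = (frob z, frob x, frob y)"
  by (simp add: phi_vec_def power_q_eq_frob)

lemma psi_vec_simp [simp]: "psi_vec q t (x, y, z) = (t * x, frob t * y, frob (frob t) * z)"
  by (simp add: psi_vec_def power_q_eq_frob power_q2_eq_frob_frob)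

lemma phi_pclass: "phi q (pclass (v :: 'a vec3)) = pclass (phi_vec q v)"
  unfolding phi_def
proof (rule image_pclass[where \<sigma> = frob])
  show "phi_vec q (smul3 c v) = smul3 (frob c) (phi_vec q v)" for c and v :: "'a vec3"
    by (cases v) (simp add: frob_mult)
  show "surj frob"
    by (rule surjI[of frob "\<lambda>x. frob (frob x)"]) simp
qed simp

lemma psi_pclass: "psi_vec q (t :: 'a) ` pclass v = pclass (psi_vec q t v)"
proof (rule image_pclass[where \<sigma> = id])
  show "psi_vec q t (smul3 c v) = smul3 (id c) (psi_vec q t v)" for c v
    by (cases v) (simp add: mult_ac)
qed simp_all

lemma phi_phi_phi [simp]: "phi q (phi q (phi q P)) = (P :: 'a vec3 set)"
proof -
  have "phi_vec q (phi_vec q (phi_vec q v)) = (v :: 'a vec3)" for v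
    by (cases v) simp
  then show ?thesis
    by (simp add: phi_def image_image)
qed

lemma phi_eq_iff [simp]: "phi q P = phi q Q \<longleftrightarrow> P = (Q :: 'a vec3 set)"
  by (metis phi_phi_phi)

lemma incident_phi [simp]: "incident (phi q P) (phi q L) \<longleftrightarrow> incident P (L :: 'a vec3 set)"
proof -
  have "dot3 (phi_vec q w) (phi_vec q v) = frob (dot3 w v)" for v w :: "'a vec3"
    by (cases v; cases w) (simp add: frob_add frob_mult algebra_simps)
  then show ?thesis
    unfolding incident_def phi_def by simp
qed

lemma phi_in_pg_points:
  assumes "(P :: 'a vec3 set) \<in> pg_points"
  shows "phi q P \<in> pg_points"
proof -
  obtain v where v: "v \<noteq> (0, 0, 0)" "P = pclass v"
    using assms unfolding pg_points_iff by blast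
  then have "phi_vec q v \<noteq> (0, 0, 0)"
    by (cases v) auto
  with v(2) show ?thesis
    unfolding pg_points_iff using phi_pclass by blast
qed

end

context cubic_frobenius
begin

definition pi_point :: "'a \<Rightarrow> 'a \<Rightarrow> 'a vec3 set" where
  "pi_point l x = pclass (x, frob x, l * frob (frob x))"

definition pi_form :: "'a \<Rightarrow> 'a vec3 \<Rightarrow> 'a \<Rightarrow> 'a" where
  "pi_form l w x = dot3 w (x, frob x, l * frob (frob x))"

lemma pi_lambda_eq: "pi_lambda q l = {pi_point l x | x. x \<noteq> 0}"
  by (simp add: pi_lambda_def pi_point_def power_q_eq_frob power_q2_eq_frob_frob)

lemma mem_pi_lambda: "P \<in> pi_lambda q l \<longleftrightarrow> (\<exists>x. x \<noteq> 0 \<and> P = pi_point l x)"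
  unfolding pi_lambda_eq by blast

lemma pi_point_in_pg_points: "x \<noteq> 0 \<Longrightarrow> pi_point l x \<in> pg_points"
  unfolding pi_point_def pg_points_iff by (intro exI[of _ "(x, frob x, l * frob (frob x))"]) simp

lemma pi_lambda_subset_pg_points: "pi_lambda q (l :: 'a) \<subseteq> pg_points"
  using pi_point_in_pg_points by (auto simp: mem_pi_lambda)

lemma incident_pi_point: "incident (pi_point l x) (pclass w) \<longleftrightarrow> pi_form l w x = 0"
  by (simp add: pi_point_def pi_form_def incident_pclass)

lemma pi_point_eq_iff:
  assumes "x \<noteq> 0"
  shows "pi_point l x = pi_point l y \<longleftrightarrow> (\<exists>c\<in>Fq. c \<noteq> 0 \<and> y = c * x)"
proof
  assume "pi_point l x = pi_point l y"
  then obtain c where c: "c \<noteq> 0" "(y, frob y, l * frob (frob y)) = smul3 c (x, frob x, l * frob (frob x))"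
    unfolding pi_point_def pclass_eq_iff by blast
  then have y: "y = c * x" and "frob (c * x) = c * frob x"
    by auto
  then have "frob c * frob x = c * frob x"
    by (simp add: frob_mult)
  with assms have "c \<in> Fq"
    by (simp add: Fq_iff)
  with c(1) y show "\<exists>c\<in>Fq. c \<noteq> 0 \<and> y = c * x"
    by blast
next
  assume "\<exists>c\<in>Fq. c \<noteq> 0 \<and> y = c * x"
  then obtain c where "c \<in> Fq" "c \<noteq> 0" "y = c * x"
    by blast
  then show "pi_point l x = pi_point l y"
    unfolding pi_point_def pclass_eq_iff by (intro exI[of _ c]) (simp add: frob_mult Fq_iff)
qed

lemma pi_form_add: "pi_form l w (x + y) = pi_form l w x + pi_form l w y"
  by (cases w) (simp add: pi_form_def frob_add algebra_simps)

lemma pi_form_Fq_mult: "c \<in> Fq \<Longrightarrow> pi_form l w (c * x) = c * pi_form l w x"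
  by (cases w) (simp add: pi_form_def frob_mult Fq_iff algebra_simps)

lemma pi_form_comb2:
  "c1 \<in> Fq \<Longrightarrow> c2 \<in> Fq \<Longrightarrow> pi_form l w (c1 * a + c2 * b) = c1 * pi_form l w a + c2 * pi_form l w b"
  by (simp add: pi_form_add pi_form_Fq_mult)

lemma pi_form_comb3:
  "c1 \<in> Fq \<Longrightarrow> c2 \<in> Fq \<Longrightarrow> c3 \<in> Fq \<Longrightarrow>
    pi_form l w (c1 * a + c2 * b + c3 * c) = c1 * pi_form l w a + c2 * pi_form l w b + c3 * pi_form l w c"
  by (simp add: pi_form_add pi_form_Fq_mult)

text \<open>The form is a polynomial of degree at most \<open>q\<^sup>2\<close> in \<open>x\<close>, so it cannot vanish on all
  \<open>q\<^sup>3\<close> elements.\<close>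

lemma pi_form_nonzero:
  assumes "w \<noteq> (0, 0, 0)" and "l \<noteq> 0"
  shows "\<exists>x. pi_form l w x \<noteq> 0"
proof -
  obtain d e f where w: "w = (d, e, f)"
    by (cases w)
  define p where "p = monom d 1 + monom e q + monom (f * l) (q\<^sup>2)"
  have pi_form_poly: "pi_form l w x = poly p x" for x
    by (simp add: p_def w pi_form_def poly_monom power_q_eq_frob power_q2_eq_frob_frob algebra_simps)
  have q_less: "1 < q" "q < q\<^sup>2"
    using q_gt_1 q_power_less[of 1 2] by simp_all
  then have "coeff p 1 = d" "coeff p q = e" "coeff p (q\<^sup>2) = f * l"
    by (simp_all add: p_def coeff_monom)
  with assms have "p \<noteq> 0"
    by (auto simp: w)
  moreover have "degree p \<le> q\<^sup>2"
    unfolding p_def using q_less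
    by (intro degree_add_le) (auto intro: order.trans[OF degree_monom_le])
  ultimately have "card {x. poly p x = 0} \<le> q\<^sup>2"
    using card_poly_roots_bound[of p] by simp
  moreover have "q\<^sup>2 < card (UNIV :: 'a set)"
    using q_power_less[of 2 3] by (simp add: card_UNIV)
  ultimately have "{x. poly p x = 0} \<noteq> UNIV"
    by auto
  then show ?thesis
    by (auto simp: pi_form_poly)
qed

definition Fq_span2 :: "'a \<Rightarrow> 'a \<Rightarrow> 'a set" where
  "Fq_span2 a b = {c1 * a + c2 * b | c1 c2. c1 \<in> Fq \<and> c2 \<in> Fq}"

definition Fq_indep2 :: "'a \<Rightarrow> 'a \<Rightarrow> bool" where
  "Fq_indep2 a b \<longleftrightarrow> (\<forall>c1\<in>Fq. \<forall>c2\<in>Fq. c1 * a + c2 * b = 0 \<longrightarrow> c1 = 0 \<and> c2 = 0)"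

definition Fq_indep3 :: "'a \<Rightarrow> 'a \<Rightarrow> 'a \<Rightarrow> bool" where
  "Fq_indep3 a b c \<longleftrightarrow>
     (\<forall>c1\<in>Fq. \<forall>c2\<in>Fq. \<forall>c3\<in>Fq. c1 * a + c2 * b + c3 * c = 0 \<longrightarrow> c1 = 0 \<and> c2 = 0 \<and> c3 = 0)"

lemma Fq_indep2_nonzero: "Fq_indep2 a b \<Longrightarrow> a \<noteq> 0 \<and> b \<noteq> 0"
  unfolding Fq_indep2_def by (metis Fq_0 Fq_1 add_0 mult_1 mult_zero_left one_neq_zero)

lemma Fq_indep3_imp_indep2:
  assumes "Fq_indep3 a b c"
  shows "Fq_indep2 a b \<and> Fq_indep2 a c \<and> Fq_indep2 b c"
proof -
  have indep: "c1 = 0 \<and> c2 = 0 \<and> c3 = 0"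
    if "c1 \<in> Fq" "c2 \<in> Fq" "c3 \<in> Fq" "c1 * a + c2 * b + c3 * c = 0" for c1 c2 c3
    using assms that unfolding Fq_indep3_def by blast
  show ?thesis
    unfolding Fq_indep2_def using indep[of _ _ 0] indep[of _ 0] indep[of 0] by auto
qed

lemma Fq_indep3_swap:
  assumes "Fq_indep3 a b c"
  shows "Fq_indep3 a c b"
  unfolding Fq_indep3_def
proof (intro ballI impI)
  fix c1 c2 c3 assume "c1 \<in> Fq" "c2 \<in> Fq" "c3 \<in> Fq" "c1 * a + c2 * c + c3 * b = 0"
  moreover from this(4) have "c1 * a + c3 * b + c2 * c = 0"
    by (simp add: ac_simps)
  ultimately show "c1 = 0 \<and> c2 = 0 \<and> c3 = 0"
    using assms unfolding Fq_indep3_def by blast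
qed

lemma Fq_indep3_rotate:
  assumes "Fq_indep3 a b c"
  shows "Fq_indep3 b c a"
  unfolding Fq_indep3_def
proof (intro ballI impI)
  fix c1 c2 c3 assume "c1 \<in> Fq" "c2 \<in> Fq" "c3 \<in> Fq" "c1 * b + c2 * c + c3 * a = 0"
  moreover from this(4) have "c3 * a + c1 * b + c2 * c = 0"
    by (simp add: ac_simps)
  ultimately show "c1 = 0 \<and> c2 = 0 \<and> c3 = 0"
    using assms unfolding Fq_indep3_def by blast
qed

lemma Fq_indep3_add_sum:
  assumes "Fq_indep3 a b c"
  shows "Fq_indep3 a b (a + b + c)"
  unfolding Fq_indep3_def
proof (intro ballI impI)
  fix c1 c2 c3 assume "c1 \<in> Fq" "c2 \<in> Fq" "c3 \<in> Fq" and "c1 * a + c2 * b + c3 * (a + b + c) = 0"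
  then have "(c1 + c3) * a + (c2 + c3) * b + c3 * c = 0" "c1 + c3 \<in> Fq" "c2 + c3 \<in> Fq"
    by (auto simp: algebra_simps)
  with assms \<open>c3 \<in> Fq\<close> have "c1 + c3 = 0 \<and> c2 + c3 = 0 \<and> c3 = 0"
    unfolding Fq_indep3_def by blast
  then show "c1 = 0 \<and> c2 = 0 \<and> c3 = 0"
    by auto
qed

lemma Fq_indep3_extend:
  assumes "Fq_indep2 a b" and "z \<notin> Fq_span2 a b"
  shows "Fq_indep3 a b z"
  unfolding Fq_indep3_def
proof (intro ballI impI)
  fix c1 c2 c3 assume c: "c1 \<in> Fq" "c2 \<in> Fq" "c3 \<in> Fq" and eq: "c1 * a + c2 * b + c3 * z = 0"
  show "c1 = 0 \<and> c2 = 0 \<and> c3 = 0"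
  proof (cases "c3 = 0")
    case True
    with assms(1) c eq show ?thesis
      unfolding Fq_indep2_def by simp
  next
    case False
    with eq have "z = (- c1 / c3) * a + (- c2 / c3) * b"
      by (simp add: field_simps add_eq_0_iff)
    moreover have "- c1 / c3 \<in> Fq" "- c2 / c3 \<in> Fq"
      using c by auto
    ultimately have "z \<in> Fq_span2 a b"
      unfolding Fq_span2_def by blast
    with assms(2) show ?thesis
      by simp
  qed
qed

lemma Fq_span2_Fq_mult:
  assumes "c \<in> Fq" and "z \<in> Fq_span2 a b"
  shows "c * z \<in> Fq_span2 a b"
proof -
  obtain c1 c2 where "c1 \<in> Fq" "c2 \<in> Fq" "z = c1 * a + c2 * b"
    using assms(2) unfolding Fq_span2_def by blast
  moreover from this(3) have "c * z = (c * c1) * a + (c * c2) * b"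
    by (simp add: algebra_simps)
  ultimately show ?thesis
    using assms(1) unfolding Fq_span2_def by blast
qed

lemma card_Fq_span2:
  assumes "Fq_indep2 a b"
  shows "card (Fq_span2 a b) = q\<^sup>2"
proof -
  define g where "g = (\<lambda>(c1, c2). c1 * a + c2 * b)"
  have "inj_on g (Fq \<times> Fq)"
  proof (rule inj_onI)
    fix u v assume u: "u \<in> Fq \<times> Fq" and v: "v \<in> Fq \<times> Fq" and "g u = g v"
    obtain c1 c2 d1 d2 where uv: "u = (c1, c2)" "v = (d1, d2)"
      by (cases u; cases v)
    with \<open>g u = g v\<close> have "(c1 - d1) * a + (c2 - d2) * b = 0"
      by (simp add: g_def algebra_simps)
    moreover have "c1 - d1 \<in> Fq" "c2 - d2 \<in> Fq"
      using u v uv by auto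
    ultimately show "u = v"
      using assms uv unfolding Fq_indep2_def by fastforce
  qed
  moreover have "Fq_span2 a b = g ` (Fq \<times> Fq)"
    by (auto simp: Fq_span2_def g_def)
  ultimately show ?thesis
    by (simp add: card_image card_cartesian_product card_Fq power2_eq_square)
qed

lemma Fq_indep3_spans:
  assumes "Fq_indep3 a b c"
  shows "\<exists>c1\<in>Fq. \<exists>c2\<in>Fq. \<exists>c3\<in>Fq. z = c1 * a + c2 * b + c3 * c"
proof -
  define g where "g = (\<lambda>(c1, c2, c3). c1 * a + c2 * b + c3 * c)"
  have "inj_on g (Fq \<times> Fq \<times> Fq)"
  proof (rule inj_onI)
    fix u v assume u: "u \<in> Fq \<times> Fq \<times> Fq" and v: "v \<in> Fq \<times> Fq \<times> Fq" and "g u = g v"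
    obtain c1 c2 c3 d1 d2 d3 where uv: "u = (c1, c2, c3)" "v = (d1, d2, d3)"
      by (cases u; cases v)
    with \<open>g u = g v\<close> have "(c1 - d1) * a + (c2 - d2) * b + (c3 - d3) * c = 0"
      by (simp add: g_def algebra_simps)
    moreover have "c1 - d1 \<in> Fq" "c2 - d2 \<in> Fq" "c3 - d3 \<in> Fq"
      using u v uv by auto
    ultimately show "u = v"
      using assms uv unfolding Fq_indep3_def by fastforce
  qed
  then have "card (g ` (Fq \<times> Fq \<times> Fq)) = card (UNIV :: 'a set)"
    by (simp add: card_image card_cartesian_product card_Fq card_UNIV power3_eq_cube)
  then have "g ` (Fq \<times> Fq \<times> Fq) = UNIV"
    by (rule card_subset_eq[rotated 2]) simp_all
  then obtain u where u: "u \<in> Fq \<times> Fq \<times> Fq" "z = g u"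
    by (metis UNIV_I imageE)
  obtain c1 c2 c3 where "u = (c1, c2, c3)"
    by (cases u)
  with u have "c1 \<in> Fq" "c2 \<in> Fq" "c3 \<in> Fq" "z = c1 * a + c2 * b + c3 * c"
    by (simp_all add: g_def)
  then show ?thesis
    by blast
qed

lemma exists_Fq_indep3: "\<exists>a b c. Fq_indep3 a b c"
proof -
  have "card Fq < card (UNIV :: 'a set)"
    using q_power_less[of 1 3] by (simp add: card_Fq card_UNIV)
  then obtain b where "b \<notin> Fq"
    by (metis UNIV_I card_mono finite leD subsetI)
  have "Fq_indep2 1 b"
    unfolding Fq_indep2_def
  proof (intro ballI impI)
    fix c1 c2 assume c: "c1 \<in> Fq" "c2 \<in> Fq" and eq: "c1 * 1 + c2 * b = 0"
    show "c1 = 0 \<and> c2 = 0"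
    proof (cases "c2 = 0")
      case False
      with eq have "b = - c1 / c2"
        by (simp add: field_simps add_eq_0_iff)
      with c \<open>b \<notin> Fq\<close> show ?thesis
        by auto
    qed (use eq in simp)
  qed
  moreover have "card (Fq_span2 1 b) < card (UNIV :: 'a set)"
    using card_Fq_span2[OF \<open>Fq_indep2 1 b\<close>] q_power_less[of 2 3] by (simp add: card_UNIV)
  then obtain c where "c \<notin> Fq_span2 1 b"
    by (metis UNIV_I card_mono finite leD subsetI)
  ultimately show ?thesis
    using Fq_indep3_extend by blast
qed

lemma Fq_indep2_iff_pi_point_neq:
  assumes "x \<noteq> 0" and "y \<noteq> 0"
  shows "Fq_indep2 x y \<longleftrightarrow> pi_point l x \<noteq> pi_point l y"
proof (intro iffI notI)
  assume "Fq_indep2 x y" and "pi_point l x = pi_point l y"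
  then obtain c where "c \<in> Fq" "c \<noteq> 0" "c * x + (- 1) * y = 0"
    using assms(1) pi_point_eq_iff by fastforce
  with \<open>Fq_indep2 x y\<close> show False
    unfolding Fq_indep2_def by (metis Fq_1 Fq_minus)
next
  assume neq: "pi_point l x \<noteq> pi_point l y"
  show "Fq_indep2 x y"
    unfolding Fq_indep2_def
  proof (intro ballI impI)
    fix c1 c2 assume c: "c1 \<in> Fq" "c2 \<in> Fq" and eq: "c1 * x + c2 * y = 0"
    show "c1 = 0 \<and> c2 = 0"
    proof (cases "c2 = 0")
      case True
      with eq assms show ?thesis
        by simp
    next
      case False
      with eq have y: "y = (- c1 / c2) * x"
        by (simp add: field_simps add_eq_0_iff)
      moreover from y assms(2) have "- c1 / c2 \<noteq> 0"
        by auto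
      moreover have "- c1 / c2 \<in> Fq"
        using c by auto
      ultimately have "pi_point l x = pi_point l y"
        using pi_point_eq_iff[OF assms(1)] by blast
      with neq show ?thesis
        by simp
    qed
  qed
qed

end

context cubic_frobenius
begin

lemma pi_form_eq_0_if_eq_0_on_Fq_basis:
  assumes "Fq_indep3 a b c" and "pi_form l w a = 0" "pi_form l w b = 0" "pi_form l w c = 0"
  shows "pi_form l w z = 0"
proof -
  obtain c1 c2 c3 where "c1 \<in> Fq" "c2 \<in> Fq" "c3 \<in> Fq" "z = c1 * a + c2 * b + c3 * c"
    using Fq_indep3_spans[OF assms(1)] by blast
  with assms(2-4) show ?thesis
    by (simp add: pi_form_comb3)
qed

lemma pi_form_zeros_eq_Fq_span2:
  fixes l :: 'a
  assumes "w \<noteq> (0, 0, 0)" "l \<noteq> 0" and "Fq_indep2 x1 x2"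
    and "pi_form l w x1 = 0" "pi_form l w x2 = 0"
  shows "{x. pi_form l w x = 0} = Fq_span2 x1 x2"
proof (intro subset_antisym subsetI)
  fix z assume z: "z \<in> {x. pi_form l w x = 0}"
  show "z \<in> Fq_span2 x1 x2"
  proof (rule ccontr)
    assume "z \<notin> Fq_span2 x1 x2"
    with assms(3) have "Fq_indep3 x1 x2 z"
      by (rule Fq_indep3_extend)
    with assms(4,5) z have "pi_form l w y = 0" for y
      using pi_form_eq_0_if_eq_0_on_Fq_basis by simp
    with pi_form_nonzero[OF assms(1,2)] show False
      by blast
  qed
next
  fix z assume "z \<in> Fq_span2 x1 x2"
  with assms(4,5) show "z \<in> {x. pi_form l w x = 0}"
    by (auto simp: Fq_span2_def pi_form_comb2)
qed

lemma on_line_pi_lambda: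
  "on_line (pi_lambda q l) (pclass w) = pi_point l ` ({x. pi_form l w x = 0} - {0})"
  unfolding on_line_def mem_pi_lambda incident_pi_point[symmetric] by blast

lemma card_pi_points:
  assumes "\<And>c x. c \<in> Fq \<Longrightarrow> x \<in> V \<Longrightarrow> c * x \<in> V"
  shows "card (V - {0}) = card (pi_point l ` (V - {0})) * (q - 1)"
proof (rule card_eq_card_image_mult_fibre)
  fix P assume "P \<in> pi_point l ` (V - {0})"
  then obtain x where x: "x \<in> V" "x \<noteq> 0" "P = pi_point l x"
    by blast
  have "{y \<in> V - {0}. pi_point l y = P} = (\<lambda>c. c * x) ` (Fq - {0})"
  proof (intro subset_antisym subsetI)
    fix y assume "y \<in> {y \<in> V - {0}. pi_point l y = P}"
    with x(3) have "pi_point l x = pi_point l y"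
      by simp
    then show "y \<in> (\<lambda>c. c * x) ` (Fq - {0})"
      using pi_point_eq_iff[OF x(2)] by blast
  next
    fix y assume "y \<in> (\<lambda>c. c * x) ` (Fq - {0})"
    then obtain c where c: "c \<in> Fq" "c \<noteq> 0" "y = c * x"
      by blast
    then have "pi_point l x = pi_point l y"
      using pi_point_eq_iff[OF x(2)] by blast
    moreover have "y \<in> V - {0}"
      using c x(1,2) assms by simp
    ultimately show "y \<in> {y \<in> V - {0}. pi_point l y = P}"
      using x(3) by simp
  qed
  moreover have "inj_on (\<lambda>c. c * x) (Fq - {0})"
    using x(2) by (auto intro: inj_onI)
  ultimately show "card {y \<in> V - {0}. pi_point l y = P} = q - 1"
    by (simp add: card_image card_Diff_singleton card_Fq)
qed simp

lemma sec_lines_pi_lambdaE: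
  assumes "L \<in> sec_lines (pi_lambda q l)"
  obtains w x1 x2 where "w \<noteq> (0, 0, 0)" "L = pclass w" "Fq_indep2 x1 x2"
    "pi_form l w x1 = 0" "pi_form l w x2 = 0"
proof -
  obtain w where w: "w \<noteq> (0, 0, 0)" "L = pclass w"
    using assms unfolding sec_lines_def pg_lines_eq_pg_points pg_points_iff by blast
  obtain P Q where PQ: "P \<in> pi_lambda q l" "Q \<in> pi_lambda q l" "P \<noteq> Q" "incident P L" "incident Q L"
    using assms unfolding sec_lines_def by blast
  obtain x1 x2 where x: "x1 \<noteq> 0" "P = pi_point l x1" "x2 \<noteq> 0" "Q = pi_point l x2"
    using PQ(1,2) unfolding mem_pi_lambda by blast
  have "Fq_indep2 x1 x2"
    using Fq_indep2_iff_pi_point_neq x PQ(3) by blast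
  moreover have "pi_form l w x1 = 0" "pi_form l w x2 = 0"
    using PQ(4,5) unfolding x(2,4) w(2) incident_pi_point .
  ultimately show ?thesis
    using that w by blast
qed

lemma card_on_sec_line_pi_lambda:
  fixes l :: 'a
  assumes "l \<noteq> 0" and "L \<in> sec_lines (pi_lambda q l)"
  shows "card (on_line (pi_lambda q l) L) = q + 1"
proof -
  obtain w x1 x2 where L: "w \<noteq> (0, 0, 0)" "L = pclass w" "Fq_indep2 x1 x2"
      "pi_form l w x1 = 0" "pi_form l w x2 = 0"
    using assms(2) by (rule sec_lines_pi_lambdaE)
  define V where "V = Fq_span2 x1 x2"
  have "on_line (pi_lambda q l) L = pi_point l ` (V - {0})"
    using pi_form_zeros_eq_Fq_span2[OF L(1) assms(1) L(3-5)] by (simp add: V_def L(2) on_line_pi_lambda)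
  moreover have "card (V - {0}) = card (pi_point l ` (V - {0})) * (q - 1)"
    by (rule card_pi_points) (simp add: V_def Fq_span2_Fq_mult)
  moreover have "0 \<in> V"
    unfolding V_def Fq_span2_def by (intro CollectI exI[of _ 0]) simp
  then have "card (V - {0}) = q\<^sup>2 - 1"
    using card_Fq_span2[OF L(3)] by (simp add: V_def card_Diff_singleton)
  moreover have "q\<^sup>2 - 1 = (q + 1) * (q - 1)"
    by (cases q) (simp_all add: power2_eq_square)
  ultimately have "(q + 1) * (q - 1) = card (on_line (pi_lambda q l) L) * (q - 1)"
    by simp
  moreover have "q - 1 \<noteq> 0"
    using q_gt_1 by simp
  ultimately show ?thesis
    by (metis mult_right_cancel)
qed

lemma sec_lines_pi_lambda_meet:
  fixes l :: 'a
  assumes "l \<noteq> 0" and "L \<in> sec_lines (pi_lambda q l)" "M \<in> sec_lines (pi_lambda q l)"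
  shows "\<exists>P\<in>pi_lambda q l. incident P L \<and> incident P M"
proof -
  obtain w x1 x2 where L: "w \<noteq> (0, 0, 0)" "L = pclass w" "Fq_indep2 x1 x2"
      "pi_form l w x1 = 0" "pi_form l w x2 = 0"
    using assms(2) by (rule sec_lines_pi_lambdaE)
  obtain v y1 y2 where M: "v \<noteq> (0, 0, 0)" "M = pclass v" "Fq_indep2 y1 y2"
      "pi_form l v y1 = 0" "pi_form l v y2 = 0"
    using assms(3) by (rule sec_lines_pi_lambdaE)
  have L_zeros: "{x. pi_form l w x = 0} = Fq_span2 x1 x2"
    using pi_form_zeros_eq_Fq_span2[OF L(1) assms(1) L(3-5)] .
  have "\<exists>z. z \<noteq> 0 \<and> pi_form l w z = 0 \<and> pi_form l v z = 0"
  proof (cases "y1 \<in> Fq_span2 x1 x2")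
    case True
    with L_zeros M(4) Fq_indep2_nonzero[OF M(3)] show ?thesis
      by blast
  next
    case False
    with L(3) have "Fq_indep3 x1 x2 y1"
      by (rule Fq_indep3_extend)
    then obtain c1 c2 c3 where c: "c1 \<in> Fq" "c2 \<in> Fq" "c3 \<in> Fq" "y2 = c1 * x1 + c2 * x2 + c3 * y1"
      using Fq_indep3_spans by blast
    \<comment> \<open>the plane spanned by \<open>x1, x2\<close> meets the one spanned by \<open>y1, y2\<close> in \<open>y2 - c3 y1\<close>\<close>
    define z where "z = c1 * x1 + c2 * x2"
    have z: "z = (- c3) * y1 + 1 * y2"
      using c(4) by (simp add: z_def)
    have "pi_form l w z = 0"
      using c L(4,5) by (simp add: z_def pi_form_comb2)
    moreover have "pi_form l v z = (- c3) * pi_form l v y1 + 1 * pi_form l v y2"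
      unfolding z using c(3) by (intro pi_form_comb2) auto
    with M(4,5) have "pi_form l v z = 0"
      by simp
    moreover have "z \<noteq> 0"
      using M(3) c(3) unfolding z Fq_indep2_def by (metis Fq_1 Fq_minus one_neq_zero)
    ultimately show ?thesis
      by blast
  qed
  then obtain z where "z \<noteq> 0" "pi_form l w z = 0" "pi_form l v z = 0"
    by blast
  then have "pi_point l z \<in> pi_lambda q l" "incident (pi_point l z) L" "incident (pi_point l z) M"
    by (auto simp: mem_pi_lambda L(2) M(2) incident_pi_point)
  then show ?thesis
    by blast
qed

lemma Fq_indep3_not_collinear:
  fixes l :: 'a
  assumes "l \<noteq> 0" and "Fq_indep3 a b c"
  shows "\<not> collinear3 (pi_point l a) (pi_point l b) (pi_point l c)"
proof
  assume "collinear3 (pi_point l a) (pi_point l b) (pi_point l c)"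
  then obtain L where L: "L \<in> pg_lines" "incident (pi_point l a) L" "incident (pi_point l b) L"
      "incident (pi_point l c) L"
    unfolding collinear3_def by blast
  then obtain w where w: "w \<noteq> (0, 0, 0)" "L = pclass w"
    unfolding pg_lines_eq_pg_points pg_points_iff by blast
  have "pi_form l w a = 0" "pi_form l w b = 0" "pi_form l w c = 0"
    using L(2-4) unfolding w(2) incident_pi_point .
  with assms(2) have "pi_form l w z = 0" for z
    by (rule pi_form_eq_0_if_eq_0_on_Fq_basis)
  with pi_form_nonzero[OF w(1) assms(1)] show False
    by blast
qed

lemma pi_lambda_quadrangle:
  fixes l :: 'a
  assumes "l \<noteq> 0"
  shows "\<exists>P1\<in>pi_lambda q l. \<exists>P2\<in>pi_lambda q l. \<exists>P3\<in>pi_lambda q l. \<exists>P4\<in>pi_lambda q l.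
    distinct [P1, P2, P3, P4] \<and> \<not> collinear3 P1 P2 P3 \<and> \<not> collinear3 P1 P2 P4
    \<and> \<not> collinear3 P1 P3 P4 \<and> \<not> collinear3 P2 P3 P4"
proof -
  obtain b1 b2 b3 where i123: "Fq_indep3 b1 b2 b3"
    using exists_Fq_indep3 by blast
  \<comment> \<open>an \<open>\<bbbF>\<^sub>q\<close>-basis together with the sum of its vectors gives a frame\<close>
  define b4 where "b4 = b1 + b2 + b3"
  have i124: "Fq_indep3 b1 b2 b4"
    using Fq_indep3_add_sum[OF i123] by (simp add: b4_def)
  have i134: "Fq_indep3 b1 b3 b4"
    using Fq_indep3_add_sum[OF Fq_indep3_swap[OF i123]] by (simp add: b4_def ac_simps)
  have i234: "Fq_indep3 b2 b3 b4"
    using Fq_indep3_add_sum[OF Fq_indep3_rotate[OF i123]] by (simp add: b4_def ac_simps)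
  have indep2: "Fq_indep2 b1 b2" "Fq_indep2 b1 b3" "Fq_indep2 b1 b4" "Fq_indep2 b2 b3"
      "Fq_indep2 b2 b4" "Fq_indep2 b3 b4"
    using Fq_indep3_imp_indep2[OF i123] Fq_indep3_imp_indep2[OF i124] Fq_indep3_imp_indep2[OF i234]
    by simp_all
  then have nonzero: "b1 \<noteq> 0" "b2 \<noteq> 0" "b3 \<noteq> 0" "b4 \<noteq> 0"
    using Fq_indep2_nonzero by blast+
  then have "pi_point l b1 \<in> pi_lambda q l" "pi_point l b2 \<in> pi_lambda q l"
      "pi_point l b3 \<in> pi_lambda q l" "pi_point l b4 \<in> pi_lambda q l"
    by (auto simp: mem_pi_lambda)
  moreover have "distinct [pi_point l b1, pi_point l b2, pi_point l b3, pi_point l b4]"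
    using indep2 nonzero Fq_indep2_iff_pi_point_neq by auto
  ultimately show ?thesis
    using Fq_indep3_not_collinear[OF assms] i123 i124 i134 i234 by blast
qed

theorem pi_lambda_is_subplane:
  fixes l :: 'a
  assumes "l \<noteq> 0"
  shows "is_subplane q (pi_lambda q l)"
  unfolding is_subplane_def
proof (intro conjI ballI impI)
  show "pi_lambda q l \<subseteq> pg_points"
    by (rule pi_lambda_subset_pg_points)
next
  fix L assume "L \<in> sec_lines (pi_lambda q l)"
  then show "card (on_line (pi_lambda q l) L) = q + 1"
    using assms by (rule card_on_sec_line_pi_lambda[rotated])
  then show "finite (on_line (pi_lambda q l) L)"
    by (metis card.infinite add_is_0 one_neq_zero)
next
  fix L M assume "L \<in> sec_lines (pi_lambda q l)" "M \<in> sec_lines (pi_lambda q l)"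
  with assms show "\<exists>P\<in>pi_lambda q l. incident P L \<and> incident P M"
    by (rule sec_lines_pi_lambda_meet)
qed (use pi_lambda_quadrangle[OF assms] in blast)

end

context cubic_frobenius
begin

lemma phi_pi_point:
  assumes "l \<in> Fq" "l ^ 3 = 1" "x \<noteq> 0"
  shows "\<exists>y. y \<noteq> 0 \<and> phi q (pi_point l x) = pi_point l y"
proof -
  have l: "frob l = l" "l \<noteq> 0"
    using assms(1,2) by (auto simp: Fq_iff)
  have "fnorm (1 / l) = 1"
    using assms(2) l by (simp add: fnorm_def frob_divide power3_eq_cube)
  then obtain a where a: "a \<noteq> 0" "frob a = (1 / l) * a"
    using hilbert90 by blast
  then have frob2_a: "frob (frob a) = a / l\<^sup>2"
    using l by (simp add: frob_mult frob_divide power2_eq_square)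
  have "phi q (pi_point l x) = pclass (l * x, frob x, frob (frob x))"
    using l by (simp add: pi_point_def phi_pclass frob_mult)
  also have "(l * x, frob x, frob (frob x)) = smul3 (l / a) (a * x, frob (a * x), l * frob (frob (a * x)))"
    unfolding frob_mult frob2_a unfolding a(2) using a(1) l(2) by (simp add: power2_eq_square)
  also have "pclass \<dots> = pi_point l (a * x)"
    unfolding pi_point_def by (rule pclass_smul3) (use a(1) l(2) in simp)
  finally show ?thesis
    using a(1) assms(3) by (intro exI[of _ "a * x"]) simp
qed

theorem phi_image_pi_lambda:
  assumes "l \<in> Fq" "l ^ 3 = 1"
  shows "phi q ` pi_lambda q l = pi_lambda q l"
proof -
  have phi_mem: "phi q P \<in> pi_lambda q l" if "P \<in> pi_lambda q l" for P
    using that phi_pi_point[OF assms] by (auto simp: mem_pi_lambda)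
  have "P \<in> phi q ` pi_lambda q l" if "P \<in> pi_lambda q l" for P
    using phi_phi_phi[of P] phi_mem[OF phi_mem[OF that]] by (metis imageI)
  with phi_mem show ?thesis
    by blast
qed

lemma ST_orbit_pclass: "ST_orbit q (pclass (v :: 'a vec3)) = {pclass (psi_vec q t v) | t. t \<noteq> 0}"
  by (simp add: ST_orbit_def psi_pclass)

lemma ST_orbit_pi_point:
  assumes "y \<noteq> 0"
  shows "ST_orbit q (pi_point l y) = pi_lambda q l"
proof -
  have "ST_orbit q (pi_point l y) = {pi_point l (t * y) | t. t \<noteq> 0}"
    unfolding pi_point_def ST_orbit_pclass by (simp add: frob_mult mult_ac)
  also have "\<dots> = {pi_point l x | x. x \<noteq> 0}"
  proof (intro subset_antisym subsetI)
    fix P assume "P \<in> {pi_point l (t * y) | t. t \<noteq> 0}"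
    then obtain t where "t * y \<noteq> 0" "P = pi_point l (t * y)"
      using assms by auto
    then show "P \<in> {pi_point l x | x. x \<noteq> 0}"
      by blast
  next
    fix P assume "P \<in> {pi_point l x | x. x \<noteq> 0}"
    then obtain x where "x / y \<noteq> 0" "P = pi_point l (x / y * y)"
      using assms by auto
    then show "P \<in> {pi_point l (t * y) | t. t \<noteq> 0}"
      by blast
  qed
  finally show ?thesis
    by (simp add: pi_lambda_eq)
qed

lemma pi_lambda_in_orb_ST: "pi_lambda q (l :: 'a) \<in> orb_ST q"
  unfolding orb_ST_def using ST_orbit_pi_point[of 1 l] pi_point_in_pg_points[of 1 l] by auto

lemma pi_lambda_inj:
  assumes "pi_lambda q l = pi_lambda q (l' :: 'a)"
  shows "l = l'"
proof -
  have "pi_point l 1 \<in> pi_lambda q l"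
    unfolding mem_pi_lambda by (intro exI[of _ 1]) simp
  with assms have "pi_point l 1 \<in> pi_lambda q l'"
    by simp
  then obtain x where "x \<noteq> 0" "pi_point l 1 = pi_point l' x"
    unfolding mem_pi_lambda by blast
  then obtain c where "c \<noteq> 0" "(x, frob x, l' * frob (frob x)) = smul3 c (1, 1, l)"
    unfolding pi_point_def pclass_eq_iff by auto
  then have "frob c = c" "l' * frob (frob c) = c * l"
    by auto
  with \<open>c \<noteq> 0\<close> show ?thesis
    by (simp add: mult.commute)
qed

theorem pi_lambda_1_eq_phi_fixed_points: "pi_lambda q (1 :: 'a) = {P \<in> pg_points. phi q P = P}"
proof (intro subset_antisym subsetI)
  fix P :: "'a vec3 set" assume "P \<in> pi_lambda q 1"
  then obtain x where "x \<noteq> 0" "P = pi_point 1 x"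
    unfolding mem_pi_lambda by blast
  then show "P \<in> {P \<in> pg_points. phi q P = P}"
    using pi_point_in_pg_points[of x 1] by (simp add: pi_point_def phi_pclass)
next
  fix P :: "'a vec3 set" assume "P \<in> {P \<in> pg_points. phi q P = P}"
  then obtain x y z where v: "(x, y, z) \<noteq> (0, 0, 0)" "P = pclass (x, y, z)" "phi q P = P"
    unfolding pg_points_iff by auto
  then have "pclass (x, y, z) = pclass (frob z, frob x, frob y)"
    by (simp add: phi_pclass)
  then obtain c where "c \<noteq> 0" "(frob z, frob x, frob y) = smul3 c (x, y, z)"
    unfolding pclass_eq_iff by blast
  then have c: "frob z = c * x" "frob x = c * y" "frob y = c * z"
    by simp_all
  with v(1) \<open>c \<noteq> 0\<close> have "x \<noteq> 0"
    by auto
  \<comment> \<open>applying \<open>frob\<close> three times shows that \<open>c\<close> has norm 1\<close>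
  have "frob (frob x) = frob c * (c * z)"
    using c by (simp add: frob_mult)
  then have "frob (frob (frob x)) = frob (frob c) * (frob c * (c * x))"
    using c by (simp add: frob_mult)
  then have "x = fnorm c * x"
    by (simp add: fnorm_def mult_ac)
  with \<open>x \<noteq> 0\<close> have "fnorm c = 1"
    by simp
  then obtain s where s: "s \<noteq> 0" "frob s = c * s"
    using hilbert90 by blast
  have "(x, y, z) = smul3 s (x / s, frob (x / s), 1 * frob (frob (x / s)))"
    using c s \<open>c \<noteq> 0\<close> by (simp add: frob_divide frob_mult field_simps)
  then have "P = pclass (smul3 s (x / s, frob (x / s), 1 * frob (frob (x / s))))"
    by (simp only: v(2))
  also have "\<dots> = pi_point 1 (x / s)"
    unfolding pi_point_def by (rule pclass_smul3) (use s(1) in simp)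
  finally show "P \<in> pi_lambda q 1"
    unfolding mem_pi_lambda using \<open>x \<noteq> 0\<close> s(1) by (intro exI[of _ "x / s"]) simp
qed

end

lemma cube_root_of_unity_ne_1:
  fixes l :: "'a::field"
  assumes "l ^ 3 = 1" and "l \<noteq> 1"
  shows "l * l + l + 1 = 0" and "l + 2 \<noteq> 0"
proof -
  have "(l - 1) * (l * l + l + 1) = 0"
    using assms(1) by (simp add: algebra_simps power3_eq_cube)
  with assms(2) show l2: "l * l + l + 1 = 0"
    by simp
  show "l + 2 \<noteq> 0"
  proof
    assume "l + 2 = 0"
    then have "l = - 2"
      by (simp add: eq_neg_iff_add_eq_0)
    with l2 have "(3 :: 'a) = 0"
      by simp
    moreover have "(l - 1) * (l - 1) = (l * l + l + 1) - 3 * l"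
      by (simp add: algebra_simps)
    ultimately have "(l - 1) * (l - 1) = 0"
      using l2 by simp
    with assms(2) show False
      by simp
  qed
qed

context cubic_frobenius
begin

lemma frob_eq_self_if_cube_root_of_unity_norm_1:
  assumes "r ^ 3 = 1" and "fnorm r = 1"
  shows "frob r = r"
proof -
  have r_pow: "r ^ n = r ^ (n mod 3)" for n
  proof -
    have "r ^ n = r ^ (3 * (n div 3) + n mod 3)"
      by simp
    also have "\<dots> = (r ^ 3) ^ (n div 3) * r ^ (n mod 3)"
      by (simp only: power_add power_mult)
    finally show ?thesis
      using assms(1) by simp
  qed
  then have frob_r: "frob r = r ^ (q mod 3)"
    by (simp add: frob_eq)
  consider "q mod 3 = 0" | "q mod 3 = 1" | "q mod 3 = 2"
    by arith
  then show ?thesis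
  proof cases
    case 1
    with frob_r have "frob r = frob 1"
      by simp
    then show ?thesis
      using frob_eq_iff[of r 1] by simp
  next
    case 2
    with frob_r show ?thesis
      by simp
  next
    case 3
    with frob_r have "frob (frob r) = r ^ 4"
      by (simp add: frob_power flip: power_mult)
    also have "\<dots> = r"
      using r_pow[of 4] by simp
    finally have "fnorm r = r ^ 4"
      using 3 frob_r by (simp add: fnorm_def power_numeral_reduce)
    with assms(2) r_pow[of 4] have "r = 1"
      by simp
    then show ?thesis
      by simp
  qed
qed

lemma frob_ratio_in_Fq:
  assumes "t \<noteq> 0" and "frob (t ^ 3) = t ^ 3"
  shows "\<exists>r\<in>Fq. r ^ 3 = 1 \<and> frob t = r * t"
proof -
  define r where "r = frob t / t"
  have "r ^ 3 = 1"
    using assms by (simp add: r_def power_divide frob_power)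
  moreover have "fnorm r = 1"
    using assms(1) by (simp add: r_def fnorm_divide fnorm_frob)
  ultimately have "r \<in> Fq"
    by (simp add: Fq_iff frob_eq_self_if_cube_root_of_unity_norm_1)
  with \<open>r ^ 3 = 1\<close> assms(1) show ?thesis
    by (intro bexI[of _ r]) (simp_all add: r_def)
qed

lemma fnorm_eq_cube_if_phi_eq_psi:
  assumes "a \<noteq> 0" "t \<noteq> 0"
    and "t * a = m * frob c" "frob t * b = m * frob a" "frob (frob t) * c = m * frob b"
  shows "fnorm m = t ^ 3"
proof -
  have "frob t \<noteq> 0" "frob (frob t) \<noteq> 0"
    using assms(2) by simp_all
  with assms(4,5) have b: "b = m * frob a / frob t" and c: "c = m * frob b / frob (frob t)"
    by (simp_all add: field_simps)
  have "frob c = frob m * frob (frob m) * a / (t * t)"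
    by (simp add: c b frob_mult frob_divide)
  with assms(3) have "t * a * (t * t) = fnorm m * a"
    using assms(2) by (simp add: fnorm_def field_simps)
  with assms(1) show ?thesis
    by (simp add: power3_eq_cube mult_ac)
qed

lemma on_pi_lambda_if_phi_eq_psi:
  assumes nz: "a \<noteq> 0" "t \<noteq> 0" "m \<noteq> 0"
    and e: "t * a = m * frob c" "frob t * b = m * frob a" "frob (frob t) * c = m * frob b"
  obtains l y where "l \<in> Fq" "l ^ 3 = 1" "y \<noteq> 0" "pclass (a, b, c) = pi_point l y"
proof -
  have Nm: "fnorm m = t ^ 3"
    using fnorm_eq_cube_if_phi_eq_psi[OF nz(1,2) e] .
  then obtain r where r: "r \<in> Fq" "r ^ 3 = 1" "frob t = r * t"
    using frob_ratio_in_Fq[OF nz(2)] frob_fnorm by metis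
  have r0: "r \<noteq> 0"
    using r(2) by auto
  have frob_r: "frob r = r"
    using r(1) by (simp add: Fq_iff)
  with r(3) have frob2_t: "frob (frob t) = r * (r * t)"
    by (simp add: frob_mult)
  define l where "l = 1 / r"
  have l: "l \<in> Fq" "l ^ 3 = 1"
    using r by (auto simp: l_def power_divide)
  define \<beta> where "\<beta> = m / frob t"
  have "fnorm t = r ^ 3 * t ^ 3"
    unfolding fnorm_def frob2_t unfolding r(3) by (simp add: power3_eq_cube mult_ac)
  with r(2) have "fnorm t = t ^ 3"
    by simp
  then have "fnorm \<beta> = 1"
    using Nm nz(2) by (simp add: \<beta>_def fnorm_divide fnorm_frob)
  then obtain s where s: "s \<noteq> 0" "frob s = \<beta> * s"
    using hilbert90 by blast
  have frob_frob_s: "frob (frob s) = frob \<beta> * (\<beta> * s)"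
    using s(2) by (simp add: frob_mult)
  have "(a, b, c) = smul3 (1 / s) (a * s, frob (a * s), l * frob (frob (a * s)))"
  proof -
    have "frob t \<noteq> 0" "frob (frob t) \<noteq> 0"
      using nz(2) by simp_all
    with e(2,3) have b: "b = m * frob a / frob t" and c: "c = m * frob b / frob (frob t)"
      by (simp_all add: field_simps)
    have "b = 1 / s * frob (a * s)"
      using s by (simp add: b \<beta>_def frob_mult)
    moreover have "c = 1 / s * (l * frob (frob (a * s)))"
      using s(1) r0 nz(2) frob_r unfolding frob_mult frob_frob_s
      by (simp add: c b \<beta>_def l_def frob_mult frob_divide frob2_t r(3) field_simps)
    ultimately show ?thesis
      using s(1) by simp
  qed
  then have "pclass (a, b, c) = pclass (smul3 (1 / s) (a * s, frob (a * s), l * frob (frob (a * s))))"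
    by (simp only:)
  also have "\<dots> = pi_point l (a * s)"
    unfolding pi_point_def by (rule pclass_smul3) (use s(1) in simp)
  finally have "pclass (a, b, c) = pi_point l (a * s)" .
  moreover have "a * s \<noteq> 0"
    using nz(1) s(1) by simp
  ultimately show ?thesis
    using l by (intro that)
qed

lemma ST_orbit_not_subplane_if_first_coord_0:
  "\<not> is_subplane q (ST_orbit q (pclass (0, b, c :: 'a)))"
proof
  let ?B = "ST_orbit q (pclass (0, b, c))"
  assume "is_subplane q ?B"
  then obtain P1 P2 P3 where P: "P1 \<in> ?B" "P2 \<in> ?B" "P3 \<in> ?B" "\<not> collinear3 P1 P2 P3"
    unfolding is_subplane_def by (elim conjE bexE) blast
  have on_line: "incident P (pclass (1, 0, 0))" if "P \<in> ?B" for P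
  proof -
    from that obtain t where "P = pclass (psi_vec q t (0, b, c))"
      unfolding ST_orbit_pclass by blast
    then show ?thesis
      by (simp add: incident_pclass)
  qed
  have "pclass (1, 0, 0) \<in> (pg_lines :: 'a vec3 set set)"
    unfolding pg_lines_eq_pg_points pg_points_iff by (intro exI[of _ "(1, 0, 0)"]) simp
  with on_line[OF P(1)] on_line[OF P(2)] on_line[OF P(3)] have "collinear3 P1 P2 P3"
    unfolding collinear3_def by blast
  with P(4) show False
    by contradiction
qed

theorem phi_invariant_subplane_in_orb_ST:
  assumes "B \<in> orb_ST q" "is_subplane q B" "phi q ` B = B"
  shows "\<exists>l\<in>Fq. l ^ 3 = 1 \<and> B = pi_lambda q l"
proof -
  obtain a b c where P: "(a, b, c) \<noteq> (0, 0, 0)" "B = ST_orbit q (pclass (a, b, c))"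
    using assms(1) unfolding orb_ST_def pg_points_iff by auto
  with assms(2) have "a \<noteq> 0"
    using ST_orbit_not_subplane_if_first_coord_0 by blast
  have "pclass (a, b, c) \<in> B"
    unfolding P(2) ST_orbit_pclass by (intro CollectI exI[of _ 1]) simp
  with assms(3) have "phi q (pclass (a, b, c)) \<in> B"
    by blast
  then obtain t where t: "t \<noteq> 0" "pclass (frob c, frob a, frob b) = pclass (t * a, frob t * b, frob (frob t) * c)"
    unfolding P(2) ST_orbit_pclass by (auto simp: phi_pclass)
  then obtain m where "m \<noteq> 0" "(t * a, frob t * b, frob (frob t) * c) = smul3 m (frob c, frob a, frob b)"
    unfolding pclass_eq_iff by blast
  then have "m \<noteq> 0" "t * a = m * frob c" "frob t * b = m * frob a" "frob (frob t) * c = m * frob b"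
    by simp_all
  then obtain l y where l: "l \<in> Fq" "l ^ 3 = 1" and "y \<noteq> 0" "pclass (a, b, c) = pi_point l y"
    by (rule on_pi_lambda_if_phi_eq_psi[OF \<open>a \<noteq> 0\<close> t(1)])
  then have "B = pi_lambda q l"
    using P(2) ST_orbit_pi_point by simp
  with l show ?thesis
    by auto
qed

lemma point_type_III_pi_point:
  assumes "l \<in> Fq" "l ^ 3 = 1" "l \<noteq> 1" "x \<noteq> 0"
  shows "point_type_III q (pi_point l x)"
  unfolding point_type_III_def
proof
  have frob_l: "frob l = l"
    using assms(1) by (simp add: Fq_iff)
  have phi1: "phi q (pi_point l x) = pclass (l * x, frob x, frob (frob x))"
    using frob_l by (simp add: pi_point_def phi_pclass frob_mult)
  have phi2: "phi q (phi q (pi_point l x)) = pclass (x, l * frob x, frob (frob x))"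
    using frob_l by (simp add: phi1 phi_pclass frob_mult)
  assume "collinear3 (pi_point l x) (phi q (pi_point l x)) (phi q (phi q (pi_point l x)))"
  then obtain L where L: "L \<in> pg_lines" "incident (pi_point l x) L"
      "incident (phi q (pi_point l x)) L" "incident (phi q (phi q (pi_point l x))) L"
    unfolding collinear3_def by blast
  then obtain w where w: "w \<noteq> (0, 0, 0)" "L = pclass w"
    unfolding pg_lines_eq_pg_points pg_points_iff by blast
  obtain d e f where def: "w = (d, e, f)"
    by (cases w)
  \<comment> \<open>with \<open>D, E, G\<close> the three terms of the form, the three incidences read \<open>D + E + l G = 0\<close>,
    \<open>l D + E + G = 0\<close>, \<open>D + l E + G = 0\<close>; this system is regular as \<open>l \<noteq> 1\<close> and \<open>l + 2 \<noteq> 0\<close>\<close>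
  define D where "D = d * x"
  define E where "E = e * frob x"
  define G where "G = f * frob (frob x)"
  have eq1: "D + E + l * G = 0"
    using L(2) by (simp add: w(2) def D_def E_def G_def pi_point_def incident_pclass algebra_simps)
  have eq2: "l * D + E + G = 0"
    using L(3) by (simp add: w(2) def D_def E_def G_def phi1 incident_pclass algebra_simps)
  have eq3: "D + l * E + G = 0"
    using L(4) by (simp add: w(2) def D_def E_def G_def phi2 incident_pclass algebra_simps)
  have "(l - 1) * (D - E) = (l * D + E + G) - (D + l * E + G)"
    by (simp add: algebra_simps)
  with eq2 eq3 have "(l - 1) * (D - E) = 0"
    by simp
  with assms(3) have DE: "D = E"
    by simp
  have "(l - 1) * (G - E) = (D + E + l * G) - (D + l * E + G)"
    by (simp add: algebra_simps)
  with eq1 eq3 have "(l - 1) * (G - E) = 0"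
    by simp
  with assms(3) have GE: "G = E"
    by simp
  have "(l + 2) * D = D + E + l * G"
    using DE GE by (simp add: algebra_simps)
  with eq1 have "(l + 2) * D = 0"
    by simp
  with cube_root_of_unity_ne_1(2)[OF assms(2,3)] have "D = 0"
    by simp
  with DE GE assms(4) have "d = 0" "e = 0" "f = 0"
    by (simp_all add: D_def E_def G_def)
  with w(1) def show False
    by simp
qed

lemma not_point_type_III_if_on_phi_fixed_line:
  assumes "L \<in> pg_lines" "phi q L = L" "incident P (L :: 'a vec3 set)"
  shows "\<not> point_type_III q P"
proof -
  have "incident (phi q P) L"
    using assms(2,3) incident_phi[of P L] by simp
  moreover from this have "incident (phi q (phi q P)) L"
    using assms(2) incident_phi[of "phi q P" L] by simp
  ultimately show ?thesis
    unfolding point_type_III_def collinear3_def using assms(1,3) by blast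
qed

lemma not_point_type_III_if_phi_fixed:
  assumes "L \<in> pg_lines" "incident P L" "phi q P = (P :: 'a vec3 set)"
  shows "\<not> point_type_III q P"
  unfolding point_type_III_def collinear3_def using assms by auto

lemma phi_fixed_if_concurrent:
  assumes "L \<in> pg_lines" "phi q L \<noteq> L" "Q \<in> pg_points"
    and "incident Q L" "incident Q (phi q L)" "incident Q (phi q (phi q (L :: 'a vec3 set)))"
  shows "phi q Q = Q"
proof (rule two_lines_meet_at_most_once)
  show "phi q L \<in> pg_lines" "phi q (phi q L) \<in> pg_lines"
    using assms(1) by (simp_all add: pg_lines_eq_pg_points phi_in_pg_points)
  show "phi q L \<noteq> phi q (phi q L)"
    using assms(2) by simp
  show "phi q Q \<in> pg_points"
    using assms(3) by (rule phi_in_pg_points)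
  show "incident (phi q Q) (phi q L)" "incident (phi q Q) (phi q (phi q L))"
    using assms(4,5) by simp_all
qed (use assms(3,5,6) in simp_all)

theorem line_type_III_pi_lambda:
  assumes "l \<in> Fq" "l ^ 3 = 1" "l \<noteq> 1" and "L \<in> plane_lines q (pi_lambda q l)"
  shows "line_type_III q L"
  unfolding line_type_III_def
proof
  have "l \<noteq> 0"
    using assms(2) by auto
  have type_III: "point_type_III q P" if "P \<in> pi_lambda q l" for P
    using that point_type_III_pi_point[OF assms(1-3)] by (auto simp: mem_pi_lambda)
  have phi_mem: "phi q P \<in> pi_lambda q l" if "P \<in> pi_lambda q l" for P
    using that phi_image_pi_lambda[OF assms(1,2)] by blast
  let ?S = "on_line (pi_lambda q l) L"
  have L_line: "L \<in> pg_lines" and "finite ?S" "card ?S = q + 1"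
    using assms(4) by (simp_all add: plane_lines_def)
  with q_gt_1 obtain P1 P2 where "P1 \<in> ?S" "P2 \<in> ?S" "P1 \<noteq> P2"
    using card_le_Suc0_iff_eq[of ?S] by auto
  then have P: "P1 \<in> pi_lambda q l" "P2 \<in> pi_lambda q l" "P1 \<noteq> P2" "incident P1 L" "incident P2 L"
    by (simp_all add: on_line_def)
  assume "concurrent3 L (phi q L) (phi q (phi q L))"
  then obtain Q where Q: "Q \<in> pg_points" "incident Q L" "incident Q (phi q L)" "incident Q (phi q (phi q L))"
    unfolding concurrent3_def by blast
  show False
  proof (cases "phi q L = L")
    case True
    from not_point_type_III_if_on_phi_fixed_line[OF L_line True P(4)] type_III[OF P(1)]
    show False
      by contradiction
  next
    case False
    \<comment> \<open>the point of concurrency is then fixed by \<open>phi\<close>, and it lies on the plane: there two of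
      its secants meet\<close>
    from L_line False Q have Q_fixed: "phi q Q = Q"
      by (rule phi_fixed_if_concurrent)
    have phi_L_line: "phi q L \<in> pg_lines"
      using L_line by (simp add: pg_lines_eq_pg_points phi_in_pg_points)
    have "L \<in> sec_lines (pi_lambda q l)"
      unfolding sec_lines_def using L_line P by blast
    moreover have "phi q P1 \<in> pi_lambda q l" "phi q P2 \<in> pi_lambda q l" "phi q P1 \<noteq> phi q P2"
        "incident (phi q P1) (phi q L)" "incident (phi q P2) (phi q L)"
      using P phi_mem by simp_all
    with phi_L_line have "phi q L \<in> sec_lines (pi_lambda q l)"
      unfolding sec_lines_def by blast
    ultimately obtain R where R: "R \<in> pi_lambda q l" "incident R L" "incident R (phi q L)"
      using sec_lines_pi_lambda_meet[OF \<open>l \<noteq> 0\<close>] by blast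
    have "R \<in> pg_points"
      using R(1) pi_lambda_subset_pg_points by blast
    from two_lines_meet_at_most_once[OF L_line phi_L_line False[symmetric] this Q(1) R(2,3) Q(2,3)]
    have "Q \<in> pi_lambda q l"
      using R(1) by simp
    from not_point_type_III_if_phi_fixed[OF L_line Q(2) Q_fixed] type_III[OF this]
    show False
      by contradiction
  qed
qed

end

theorem theorem3p2:
  fixes q :: nat
  assumes "\<exists>p k. prime p \<and> k > 0 \<and> q = p ^ k"
    and "card (UNIV :: 'a::{finite,field} set) = q ^ 3"
  shows "{B \<in> orb_ST q. is_subplane q B \<and> phi q ` B = B}
           = pi_lambda q ` {l::'a. l ^ q = l \<and> l ^ 3 = 1}
       \<and> card {B \<in> orb_ST q. is_subplane q (B::'a vec3 set set) \<and> phi q ` B = B} = gcd 3 (q - 1)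
       \<and> pi_lambda q (1::'a) = {P \<in> pg_points. phi q P = P}
       \<and> (gcd 3 (q - 1) = 3 \<longrightarrow>
           (\<forall>l::'a. l ^ q = l \<and> l ^ 3 = 1 \<and> l \<noteq> 1 \<longrightarrow>
              (\<forall>P \<in> pi_lambda q l. point_type_III q P)
            \<and> (\<forall>L \<in> plane_lines q (pi_lambda q l). line_type_III q L)))"
proof -
  interpret cubic_frobenius q "\<lambda>x::'a. x ^ q"
    using assms by unfold_locales simp_all
  let ?R = "{l::'a. l ^ q = l \<and> l ^ 3 = 1}"
  have R_iff: "l \<in> ?R \<longleftrightarrow> l \<in> Fq \<and> l ^ 3 = 1" for l
    by (simp add: Fq_iff)
  have fixed_subplanes: "{B \<in> orb_ST q. is_subplane q B \<and> phi q ` B = B} = pi_lambda q ` ?R"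
  proof (intro subset_antisym subsetI)
    fix B :: "'a vec3 set set" assume "B \<in> {B \<in> orb_ST q. is_subplane q B \<and> phi q ` B = B}"
    then have "\<exists>l\<in>Fq. l ^ 3 = 1 \<and> B = pi_lambda q l"
      by (intro phi_invariant_subplane_in_orb_ST) simp_all
    then obtain l where "l \<in> Fq" "l ^ 3 = 1 \<and> B = pi_lambda q l"
      by (rule bexE)
    then have "l \<in> ?R" and B: "B = pi_lambda q l"
      using R_iff by simp_all
    show "B \<in> pi_lambda q ` ?R"
      using B \<open>l \<in> ?R\<close> by (rule image_eqI)
  next
    fix B :: "'a vec3 set set" assume "B \<in> pi_lambda q ` ?R"
    then obtain l where B: "B = pi_lambda q l" and "l \<in> ?R"
      by (rule imageE)
    then have l: "l \<in> Fq" "l ^ 3 = 1" "l \<noteq> 0"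
      using R_iff by auto
    show "B \<in> {B \<in> orb_ST q. is_subplane q B \<and> phi q ` B = B}"
      unfolding B using pi_lambda_in_orb_ST pi_lambda_is_subplane[OF l(3)] phi_image_pi_lambda[OF l(1,2)]
      by simp
  qed
  have inj: "inj_on (pi_lambda q) ?R"
    by (rule inj_onI) (rule pi_lambda_inj)
  have types: "(\<forall>P \<in> pi_lambda q l. point_type_III q P) \<and> (\<forall>L \<in> plane_lines q (pi_lambda q l). line_type_III q L)"
    if "l ^ q = l \<and> l ^ 3 = 1 \<and> l \<noteq> 1" for l :: 'a
  proof -
    have l: "l \<in> Fq" "l ^ 3 = 1" "l \<noteq> 1"
      using that by (simp_all add: Fq_iff)
    have "point_type_III q P" if "P \<in> pi_lambda q l" for P
      using that point_type_III_pi_point[OF l] by (auto simp: mem_pi_lambda)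
    moreover have "line_type_III q L" if "L \<in> plane_lines q (pi_lambda q l)" for L
      using l that by (rule line_type_III_pi_lambda)
    ultimately show ?thesis
      by blast
  qed
  have card: "card {B \<in> orb_ST q. is_subplane q (B :: 'a vec3 set set) \<and> phi q ` B = B} = gcd 3 (q - 1)"
    unfolding fixed_subplanes card_image[OF inj] using card_cube_roots_of_unity_Fq by simp
  have "gcd 3 (q - 1) = 3 \<longrightarrow> (\<forall>l::'a. l ^ q = l \<and> l ^ 3 = 1 \<and> l \<noteq> 1 \<longrightarrow>
      (\<forall>P \<in> pi_lambda q l. point_type_III q P) \<and> (\<forall>L \<in> plane_lines q (pi_lambda q l). line_type_III q L))"
    by (intro impI allI) (erule types)
  with fixed_subplanes card pi_lambda_1_eq_phi_fixed_points show ?thesis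
    by (intro conjI) assumption+
qed

end
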